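(* Let $k\ge1$ and let $M_k$ be the set of LTI probability measures on $X_k=\{0,1\}^{\{0,\ldots,k\}}$. Then: (i) the map ${\cal C}\mapsto\nu_{\cal C}$ is a bijection from the set of cycles of the de Bruijn graph $G_k$ onto the set of $k$-primitive BPC measures on $\{0,1\}^{\mathbb{Z}}$; (ii) the extreme points of the convex polytope $M_k$ are exactly the measures $\pi_k\nu_{\cal C}$ with ${\cal C}$ a cycle of $G_k$; (iii) every $\mu_k\in M_k$ equals $\pi_k\nu$ for some finite convex combination $\nu$ of $k$-primitive BPC measures $\nu_{\cal C}$; in particular every $\mu_k\in M_k$ has a translation invariant extension to $\{0,1\}^{\mathbb{Z}}$ which is a PC measure.
   Context: LTI: for all subsets $A,A'\subset\{0,\ldots,k\}$ with $A'$ a translate of $A$, the marginal on $\{0,1\}^{A'}$ is the translate of the marginal on $\{0,1\}^A$. $\pi_k\nu$ is the marginal of a measure $\nu$ on $\{0,1\}^{\mathbb{Z}}$ on the coordinates $0,\ldots,k$. The binary de Bruijn graph $G_k$ of order $k$ is the directed graph whose vertices are the binary strings of length $k$ and whose edges are the binary strings of length $k+1$, the edge $a\theta b$ ($a,b\in\{0,1\}$, $\theta$ a string of length $k-1$) going from vertex $a\theta$ to vertex $\theta b$ (so there are loops at $0^k$ and $1^k$). A cycle is a closed directed path with no repeated vertex (loops count as cycles), considered up to cyclic rotation of its starting point. For a minimal closed path $P$ with edges $\eta^{(1)},\ldots,\eta^{(p)}$ in order (minimal meaning it is not a repetition of a shorter closed path), the associated periodic configuration is obtained by traversing $P$ repeatedly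 and recording the first symbol $\eta^{(j)}_0$ of each edge, and $\nu_P$ is the measure giving mass $1/p$ to each of the $p$ translates of this configuration. A PC measure is a translation invariant probability measure on $\{0,1\}^{\mathbb{Z}}$ supported on periodic configurations; a BPC measure is one giving mass $1/p$ to each of the $p$ translates of a single configuration of minimal period $p$. A periodic configuration $\eta$ of minimal period $p$ (and its BPC measure) is $k$-primitive if $\eta_i\cdots\eta_{i+k-1}=\eta_j\cdots\eta_{j+k-1}$ only when $p$ divides $j-i$. *)

theory Defs
  imports "HOL-Probability.Probability"
begin

text \<open>Elements of X_k are boolean lists of length k+1 (position i = coordinate i).
  A probability measure on X_k is a nonnegative function on such lists summing to 1.\<close>

definition Xk :: "nat \<Rightarrow> bool list set" where
  "Xk k = {x. length x = Suc k}"

definition prob_on_Xk :: "nat \<Rightarrow> (bool list \<Rightarrow> real) \<Rightarrow> bool" where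
  "prob_on_Xk k p \<longleftrightarrow> (\<forall>x. 0 \<le> p x) \<and> (\<forall>x. p x \<noteq> 0 \<longrightarrow> x \<in> Xk k)
     \<and> sum p (Xk k) = 1"

definition marg :: "nat \<Rightarrow> (bool list \<Rightarrow> real) \<Rightarrow> nat set \<Rightarrow> nat \<Rightarrow> (nat \<Rightarrow> bool) \<Rightarrow> real" where
  "marg k p A t y = (\<Sum>x\<in>{x\<in>Xk k. \<forall>i\<in>A. x ! (i + t) = y i}. p x)"

text \<open>LTI: marginal on a translate A+t equals the translate of the marginal on A
  (negative translations are the same condition with roles exchanged).\<close>
definition LTI :: "nat \<Rightarrow> (bool list \<Rightarrow> real) \<Rightarrow> bool" where
  "LTI k p \<longleftrightarrow> (\<forall>A t y. A \<subseteq> {0..k} \<and> (\<lambda>i. i + t) ` A \<subseteq> {0..k}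
       \<longrightarrow> marg k p A t y = marg k p A 0 y)"

definition Mk :: "nat \<Rightarrow> (bool list \<Rightarrow> real) set" where
  "Mk k = {p. prob_on_Xk k p \<and> LTI k p}"

definition extreme_pt :: "('a \<Rightarrow> real) set \<Rightarrow> ('a \<Rightarrow> real) \<Rightarrow> bool" where
  "extreme_pt S x \<longleftrightarrow> x \<in> S \<and>
     \<not> (\<exists>a\<in>S. \<exists>b\<in>S. \<exists>t::real. 0 < t \<and> t < 1 \<and> a \<noteq> b \<and> x = (\<lambda>z. t * a z + (1 - t) * b z))"

type_synonym config = "int \<Rightarrow> bool"

definition shift :: "int \<Rightarrow> config \<Rightarrow> config" where
  "shift j \<eta> = (\<lambda>i. \<eta> (i + j))"

definition is_period :: "config \<Rightarrow> nat \<Rightarrow> bool" where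
  "is_period \<eta> p \<longleftrightarrow> 0 < p \<and> (\<forall>i. \<eta> (i + int p) = \<eta> i)"

definition periodic :: "config \<Rightarrow> bool" where
  "periodic \<eta> \<longleftrightarrow> (\<exists>p. is_period \<eta> p)"

definition min_period :: "config \<Rightarrow> nat \<Rightarrow> bool" where
  "min_period \<eta> p \<longleftrightarrow> is_period \<eta> p \<and> (\<forall>q. 0 < q \<and> q < p \<longrightarrow> \<not> is_period \<eta> q)"

definition translates_measure :: "config \<Rightarrow> nat \<Rightarrow> config pmf" where
  "translates_measure \<eta> p = map_pmf (\<lambda>j. shift (int j) \<eta>) (pmf_of_set {0..<p})"

text \<open>Measures on {0,1}^Z supported on (countably many) periodic configurations are
  discrete, so they are represented as pmfs.\<close>
definition trans_inv :: "config pmf \<Rightarrow> bool" where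
  "trans_inv \<nu> \<longleftrightarrow> map_pmf (shift 1) \<nu> = \<nu>"

definition PC :: "config pmf \<Rightarrow> bool" where
  "PC \<nu> \<longleftrightarrow> trans_inv \<nu> \<and> (\<forall>\<eta>\<in>set_pmf \<nu>. periodic \<eta>)"

definition k_primitive :: "nat \<Rightarrow> config \<Rightarrow> nat \<Rightarrow> bool" where
  "k_primitive k \<eta> p \<longleftrightarrow> (\<forall>i j. (\<forall>m<k. \<eta> (i + int m) = \<eta> (j + int m)) \<longrightarrow> int p dvd (j - i))"

definition BPC :: "config pmf \<Rightarrow> bool" where
  "BPC \<nu> \<longleftrightarrow> (\<exists>\<eta> p. min_period \<eta> p \<and> \<nu> = translates_measure \<eta> p)"

definition kprim_BPC :: "nat \<Rightarrow> config pmf \<Rightarrow> bool" where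
  "kprim_BPC k \<nu> \<longleftrightarrow> (\<exists>\<eta> p. min_period \<eta> p \<and> k_primitive k \<eta> p \<and> \<nu> = translates_measure \<eta> p)"

definition proj :: "nat \<Rightarrow> config pmf \<Rightarrow> bool list \<Rightarrow> real" where
  "proj k \<nu> = (\<lambda>x. measure_pmf.prob \<nu> {\<eta>. map \<eta> [0..int k] = x})"

text \<open>Vertices: boolean lists of length k. Edge a theta b goes from a theta to theta b.\<close>
definition dB_edge :: "nat \<Rightarrow> bool list \<Rightarrow> bool list \<Rightarrow> bool" where
  "dB_edge k u v \<longleftrightarrow> length u = k \<and> length v = k \<and> tl u = butlast v"

text \<open>A cycle written as its list of vertices v_0,...,v_{p-1} (closed, no repeated vertex).
  Since G_k has at most one edge between two vertices, the vertex list determines the path.\<close>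
definition cycle_list :: "nat \<Rightarrow> bool list list \<Rightarrow> bool" where
  "cycle_list k vs \<longleftrightarrow> vs \<noteq> [] \<and> distinct vs \<and>
     (\<forall>i<length vs. dB_edge k (vs ! i) (vs ! (Suc i mod length vs)))"

definition cycles :: "nat \<Rightarrow> bool list list set set" where
  "cycles k = {{rotate j vs | j. True} | vs. cycle_list k vs}"

text \<open>Periodic configuration of a closed path: the first symbol of edge
  v_j (last v_{j+1}) is the first symbol of v_j.\<close>
definition path_config :: "bool list list \<Rightarrow> config" where
  "path_config vs = (\<lambda>i. hd (vs ! nat (i mod int (length vs))))"

definition nu_path :: "bool list list \<Rightarrow> config pmf" where
  "nu_path vs = translates_measure (path_config vs) (length vs)"

definition nu_cycle :: "bool list list set \<Rightarrow> config pmf" where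
  "nu_cycle C = nu_path (SOME vs. vs \<in> C)"

end

theory Submission
  imports Defs
begin

text \<open>
  A measure in M_k is a unit flow on the de Bruijn graph G_k: the window a\<theta>b carries the weight
  of the edge from a\<theta> to \<theta>b, and LTI for the two subwindows of length k is conservation of
  flow at every vertex. The projection of \<nu>_C is the uniform flow on the edges of the cycle C.
  A flow supported on the edges of one cycle is constant along it, hence uniform, so these flows
  are extreme. Conversely the positive edges of any flow contain a cycle, and subtracting the
  largest admissible multiple of its uniform flow removes an edge from the support; induction on
  the support writes every flow as a convex combination of cycle flows, which identifies the extreme
  points and yields the PC extension. Finally, the length-k windows of a k-primitive configuration
  of minimal period p are p distinct consecutive vertices of G_k, i.e. a cycle, and this inverts
  C \<mapsto> \<nu>_C.
\<close>

definition window :: "config \<Rightarrow> int \<Rightarrow> nat \<Rightarrow> bool list" where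
  "window \<eta> i n = map (\<lambda>m. \<eta> (i + int m)) [0..<n]"

lemma length_window [simp]: "length (window \<eta> i n) = n"
  by (simp add: window_def)

lemma nth_window [simp]: "m < n \<Longrightarrow> window \<eta> i n ! m = \<eta> (i + int m)"
  by (simp add: window_def)

lemma window_eq_iff: "window \<eta> i n = window \<eta>' j n \<longleftrightarrow> (\<forall>m<n. \<eta> (i + int m) = \<eta>' (j + int m))"
  by (simp add: list_eq_iff_nth_eq)

lemma butlast_window: "butlast (window \<eta> i (Suc n)) = window \<eta> i n"
  by (simp add: list_eq_iff_nth_eq nth_butlast)

lemma tl_window: "tl (window \<eta> i (Suc n)) = window \<eta> (i + 1) n"
  by (simp add: list_eq_iff_nth_eq nth_tl algebra_simps)

lemma window_shift: "window (shift j \<eta>) i n = window \<eta> (i + j) n"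
  by (simp add: window_def shift_def algebra_simps)

lemma window_in_Xk: "window \<eta> i (Suc k) \<in> Xk k"
  by (simp add: Xk_def)

lemma finite_Xk: "finite (Xk k)"
  using finite_lists_length_eq[of "UNIV :: bool set" "Suc k"] by (simp add: Xk_def)

lemma proj_eq_pmf_window: "proj k \<nu> = pmf (map_pmf (\<lambda>\<eta>. window \<eta> 0 (Suc k)) \<nu>)"
proof -
  have "map \<eta> [0..int k] = window \<eta> 0 (Suc k)" for \<eta>
    by (simp add: list_eq_iff_nth_eq nth_upto)
  then show ?thesis
    by (intro ext) (simp add: proj_def pmf_map vimage_def)
qed

lemma shift_shift: "shift a (shift b \<eta>) = shift (a + b) \<eta>"
  by (simp add: shift_def algebra_simps)

lemma is_period_add_mult:
  assumes "is_period \<eta> p"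
  shows "\<eta> (i + int p * c) = \<eta> i"
proof (induction c rule: int_induct[where k = 0])
  case (step1 c)
  then show ?case using assms by (simp add: is_period_def distrib_left add.assoc[symmetric])
next
  case (step2 c)
  then show ?case using assms unfolding is_period_def
    by (metis (no_types, opaque_lifting) add.assoc diff_add_cancel mult.right_neutral
        right_diff_distrib)
qed simp

lemma is_period_mod: "is_period \<eta> p \<Longrightarrow> \<eta> (i mod int p) = \<eta> i"
  using is_period_add_mult[of \<eta> p "i mod int p" "i div int p"] by simp

lemma shift_mod_period: "is_period \<eta> p \<Longrightarrow> shift (int (n mod p)) \<eta> = shift (int n) \<eta>"
  unfolding shift_def
  by (metis (no_types, opaque_lifting) is_period_mod mod_add_right_eq zmod_int)

lemma is_period_shift: "is_period \<eta> p \<Longrightarrow> is_period (shift j \<eta>) p"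
  unfolding is_period_def shift_def by (metis add.assoc add.commute)

lemma min_period_unique: "min_period \<eta> p \<Longrightarrow> min_period \<eta> q \<Longrightarrow> p = q"
  unfolding min_period_def is_period_def by (metis linorder_neqE_nat)

lemma map_pmf_add_mod_pmf_of_set:
  fixes p :: nat
  assumes "0 < p"
  shows "map_pmf (\<lambda>i. (i + j) mod p) (pmf_of_set {0..<p}) = pmf_of_set {0..<p}"
proof -
  let ?f = "\<lambda>i. (i + j) mod p"
  have "b \<in> ?f ` {0..<p}" if "b < p" for b
  proof
    have "b + (p - j mod p) + j = b + p + p * (j div p)"
      using mult_div_mod_eq[of p j] mod_less_divisor[OF assms, of j] by linarith
    then show "b = ?f ((b + (p - j mod p)) mod p)"
      using that by (simp add: mod_add_left_eq)
  qed (use assms in simp)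
  then have surj: "{0..<p} \<subseteq> ?f ` {0..<p}" by auto
  moreover have "?f ` {0..<p} \<subseteq> {0..<p}" using assms by auto
  ultimately show ?thesis
    using map_pmf_of_set_inj[OF finite_surj_inj[OF _ surj]] assms by simp
qed

lemma set_pmf_translates_measure:
  "0 < p \<Longrightarrow> set_pmf (translates_measure \<eta> p) = (\<lambda>j. shift (int j) \<eta>) ` {0..<p}"
  by (simp add: translates_measure_def)

lemma translates_measure_shift:
  assumes per: "is_period \<eta> p"
  shows "translates_measure (shift (int j) \<eta>) p = translates_measure \<eta> p"
proof -
  have p: "0 < p" using per by (simp add: is_period_def)
  have "shift (int i) (shift (int j) \<eta>) = shift (int ((i + j) mod p)) \<eta>" for i
    by (simp add: shift_shift shift_mod_period[OF per])
  then have "translates_measure (shift (int j) \<eta>) p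
      = map_pmf (\<lambda>i. shift (int i) \<eta>) (map_pmf (\<lambda>i. (i + j) mod p) (pmf_of_set {0..<p}))"
    by (simp add: translates_measure_def pmf.map_comp o_def)
  then show ?thesis
    by (simp add: map_pmf_add_mod_pmf_of_set[OF p] translates_measure_def)
qed

lemma trans_inv_translates_measure: "is_period \<eta> p \<Longrightarrow> trans_inv (translates_measure \<eta> p)"
  using translates_measure_shift[of \<eta> p 1]
  by (simp add: trans_inv_def translates_measure_def pmf.map_comp o_def shift_shift add.commute)

lemma map_pmf_shift_of_nat: "trans_inv \<nu> \<Longrightarrow> map_pmf (shift (int t)) \<nu> = \<nu>"
proof (induction t)
  case (Suc t)
  have "shift (int (Suc t)) = shift 1 \<circ> shift (int t)"
    by (auto simp: shift_shift add.commute)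
  then have "map_pmf (shift (int (Suc t))) \<nu> = map_pmf (shift 1) (map_pmf (shift (int t)) \<nu>)"
    by (simp add: pmf.map_comp)
  then show ?case
    using Suc by (simp add: trans_inv_def)
qed (simp add: shift_def[abs_def])

lemma cycle_list_length_pos: "cycle_list k vs \<Longrightarrow> 0 < length vs"
  by (simp add: cycle_list_def)

lemma cycle_list_length_nth: "cycle_list k vs \<Longrightarrow> i < length vs \<Longrightarrow> length (vs ! i) = k"
  by (auto simp: cycle_list_def dB_edge_def)

lemma cycle_list_nth_Suc_mod:
  assumes "cycle_list k vs" "Suc m < k" "q < length vs"
  shows "vs ! (Suc q mod length vs) ! m = vs ! q ! Suc m"
proof -
  have "tl (vs ! q) = butlast (vs ! (Suc q mod length vs))"
    and "length (vs ! (Suc q mod length vs)) = k" "length (vs ! q) = k"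
    using assms by (auto simp: cycle_list_def dB_edge_def)
  then show ?thesis
    using assms(2) by (auto simp: nth_butlast nth_tl dest: arg_cong[where f = "\<lambda>xs. xs ! m"])
qed

lemma nat_mod_add_one:
  assumes "0 < p"
  shows "nat ((i + 1) mod int p) = Suc (nat (i mod int p)) mod p"
proof -
  have "(i + 1) mod int p = (i mod int p + 1) mod int p" by (simp add: mod_add_left_eq)
  also have "i mod int p + 1 = int (Suc (nat (i mod int p)))" using assms by simp
  finally have "(i + 1) mod int p = int (Suc (nat (i mod int p)) mod p)" by (simp add: zmod_int)
  then show ?thesis by simp
qed

lemma path_config_add_nth:
  assumes c: "cycle_list k vs" and "m < k"
  shows "path_config vs (i + int m) = vs ! nat (i mod int (length vs)) ! m"
  using \<open>m < k\<close>
proof (induction m arbitrary: i)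
  case 0
  have "nat (i mod int (length vs)) < length vs"
    using cycle_list_length_pos[OF c] by (simp add: nat_less_iff)
  then have "vs ! nat (i mod int (length vs)) \<noteq> []"
    using cycle_list_length_nth[OF c] 0 by fastforce
  then show ?case by (simp add: path_config_def hd_conv_nth)
next
  case (Suc m)
  have p: "0 < length vs" using cycle_list_length_pos[OF c] .
  have q: "nat (i mod int (length vs)) < length vs" using p by (simp add: nat_less_iff)
  have "path_config vs (i + int (Suc m)) = vs ! nat ((i + 1) mod int (length vs)) ! m"
    using Suc by (simp flip: Suc.IH add: algebra_simps)
  also have "\<dots> = vs ! nat (i mod int (length vs)) ! Suc m"
    using cycle_list_nth_Suc_mod[OF c Suc.prems q] by (simp add: nat_mod_add_one[OF p])
  finally show ?case .
qed

lemma window_path_config: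
  assumes c: "cycle_list k vs"
  shows "window (path_config vs) i k = vs ! nat (i mod int (length vs))"
proof -
  have "nat (i mod int (length vs)) < length vs"
    using cycle_list_length_pos[OF c] by (simp add: nat_less_iff)
  then show ?thesis
    by (simp add: list_eq_iff_nth_eq cycle_list_length_nth[OF c] path_config_add_nth[OF c])
qed

lemma window_path_config_of_nat:
  "cycle_list k vs \<Longrightarrow> window (path_config vs) (int i) k = vs ! (i mod length vs)"
  by (simp add: window_path_config flip: zmod_int)

lemma is_period_path_config: "cycle_list k vs \<Longrightarrow> is_period (path_config vs) (length vs)"
  by (simp add: cycle_list_def is_period_def path_config_def)

lemma k_primitive_path_config:
  assumes c: "cycle_list k vs"
  shows "k_primitive k (path_config vs) (length vs)"
  unfolding k_primitive_def
proof (intro allI impI)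
  fix i j
  assume "\<forall>m<k. path_config vs (i + int m) = path_config vs (j + int m)"
  then have "vs ! nat (i mod int (length vs)) = vs ! nat (j mod int (length vs))"
    by (simp flip: window_eq_iff window_path_config[OF c])
  moreover have "nat (i mod int (length vs)) < length vs" "nat (j mod int (length vs)) < length vs"
    using cycle_list_length_pos[OF c] by (simp_all add: nat_less_iff)
  ultimately have "nat (i mod int (length vs)) = nat (j mod int (length vs))"
    using c by (simp add: cycle_list_def nth_eq_iff_index_eq)
  then have "i mod int (length vs) = j mod int (length vs)"
    using cycle_list_length_pos[OF c] by (simp add: eq_nat_nat_iff)
  then show "int (length vs) dvd j - i"
    by (metis mod_eq_dvd_iff)
qed

lemma min_period_path_config:
  assumes c: "cycle_list k vs" and k: "1 \<le> k"
  shows "min_period (path_config vs) (length vs)"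
  unfolding min_period_def
proof (intro conjI allI impI notI)
  show "is_period (path_config vs) (length vs)" using is_period_path_config[OF c] .
  fix q
  assume q: "0 < q \<and> q < length vs" and per: "is_period (path_config vs) q"
  have "\<forall>m<k. path_config vs (0 + int m) = path_config vs (int q + int m)"
    using per unfolding is_period_def by (metis add.commute add_0)
  then have "int (length vs) dvd int q - 0"
    using k_primitive_path_config[OF c] unfolding k_primitive_def by blast
  then have "length vs dvd q" by simp
  then show False using q nat_dvd_not_less by blast
qed

lemma path_config_inj:
  assumes "cycle_list k vs" "cycle_list k vs'" "1 \<le> k" "path_config vs = path_config vs'"
  shows "vs = vs'"
proof -
  have "length vs = length vs'"
    using assms min_period_path_config min_period_unique by metis
  then show ?thesis
    using assms window_path_config_of_nat by (metis list_eq_iff_nth_eq mod_less)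
qed

lemma path_config_rotate:
  assumes c: "cycle_list k vs"
  shows "path_config (rotate j vs) = shift (int j) (path_config vs)"
proof
  fix i
  define n where "n = length vs"
  have p: "0 < n" using cycle_list_length_pos[OF c] by (simp add: n_def)
  have "int ((j + nat (i mod int n)) mod n) = (int j + i mod int n) mod int n"
    using p by (simp add: zmod_int)
  also have "\<dots> = (i + int j) mod int n"
    by (simp add: mod_add_right_eq add.commute)
  finally have "(j + nat (i mod int n)) mod n = nat ((i + int j) mod int n)"
    by (metis nat_int)
  moreover have "nat (i mod int n) < n"
    using p by (simp add: nat_less_iff)
  ultimately show "path_config (rotate j vs) i = shift (int j) (path_config vs) i"
    by (simp add: path_config_def shift_def nth_rotate n_def)
qed

lemma cycle_list_rotate:
  assumes c: "cycle_list k vs"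
  shows "cycle_list k (rotate j vs)"
proof -
  have p: "0 < length vs" using cycle_list_length_pos[OF c] .
  have "dB_edge k (rotate j vs ! i) (rotate j vs ! (Suc i mod length vs))" if "i < length vs" for i
  proof -
    have "rotate j vs ! (Suc i mod length vs) = vs ! (Suc ((j + i) mod length vs) mod length vs)"
      using p by (simp add: nth_rotate mod_add_right_eq mod_Suc_eq)
    then show ?thesis
      using c p that by (simp add: cycle_list_def nth_rotate)
  qed
  then show ?thesis
    using c by (simp add: cycle_list_def)
qed

lemma nu_path_rotate: "cycle_list k vs \<Longrightarrow> nu_path (rotate j vs) = nu_path vs"
  by (simp add: nu_path_def path_config_rotate translates_measure_shift is_period_path_config)

definition rotations :: "'a list \<Rightarrow> 'a list set" where
  "rotations xs = {rotate j xs | j. True}"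

lemma cycles_eq_image_rotations: "cycles k = rotations ` {vs. cycle_list k vs}"
  by (auto simp: cycles_def rotations_def)

lemma rotations_rotate: "rotations (rotate j xs) = rotations xs"
proof -
  have "rotate i xs \<in> rotations (rotate j xs)" for i
  proof -
    have "rotate (i + length xs * j - j) (rotate j xs) = rotate (i + length xs * j) xs"
      by (cases xs) (simp_all add: rotate_rotate ac_simps)
    also have "\<dots> = rotate i xs"
      by (metis rotate_conv_mod mod_mult_self2 mult.commute)
    finally show ?thesis unfolding rotations_def by (metis (mono_tags, lifting) mem_Collect_eq)
  qed
  then show ?thesis
    by (auto simp: rotations_def rotate_rotate)
qed

lemma nu_cycle_rotations:
  assumes c: "cycle_list k vs"
  shows "nu_cycle (rotations vs) = nu_path vs"
proof -
  have "vs \<in> rotations vs"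
    unfolding rotations_def by (metis (mono_tags, lifting) mem_Collect_eq rotate0 id_apply)
  then have "(SOME xs. xs \<in> rotations vs) \<in> rotations vs" by (rule someI)
  then show ?thesis
    unfolding nu_cycle_def rotations_def using nu_path_rotate[OF c] by auto
qed

definition cycle_edge :: "nat \<Rightarrow> bool list list \<Rightarrow> nat \<Rightarrow> bool list" where
  "cycle_edge k vs j = window (path_config vs) (int j) (Suc k)"

definition cycle_edges :: "nat \<Rightarrow> bool list list \<Rightarrow> bool list set" where
  "cycle_edges k vs = cycle_edge k vs ` {0..<length vs}"

lemma butlast_cycle_edge: "cycle_list k vs \<Longrightarrow> butlast (cycle_edge k vs j) = vs ! (j mod length vs)"
  by (simp add: cycle_edge_def butlast_window window_path_config_of_nat)

lemma tl_cycle_edge: "cycle_list k vs \<Longrightarrow> tl (cycle_edge k vs j) = vs ! (Suc j mod length vs)"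
  using window_path_config_of_nat[of k vs "Suc j"]
  by (simp add: cycle_edge_def tl_window add.commute)

lemma cycle_edge_mod:
  assumes "cycle_list k vs"
  shows "cycle_edge k vs (j mod length vs) = cycle_edge k vs j"
proof -
  have edge: "cycle_edge k vs i = window (shift (int i) (path_config vs)) 0 (Suc k)" for i
    by (simp add: cycle_edge_def window_shift)
  show ?thesis
    unfolding edge shift_mod_period[OF is_period_path_config[OF assms]] ..
qed

lemma inj_on_cycle_edge: "cycle_list k vs \<Longrightarrow> inj_on (cycle_edge k vs) {0..<length vs}"
  by (rule inj_onI)
    (metis butlast_cycle_edge atLeastLessThan_iff cycle_list_def mod_less nth_eq_iff_index_eq)

lemma card_cycle_edges: "cycle_list k vs \<Longrightarrow> card (cycle_edges k vs) = length vs"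
  by (simp add: cycle_edges_def card_image inj_on_cycle_edge)

lemma cycle_edges_subset_Xk: "cycle_edges k vs \<subseteq> Xk k"
  by (auto simp: cycle_edges_def cycle_edge_def Xk_def)

lemma cycle_edges_butlast_unique:
  assumes c: "cycle_list k vs" and "x \<in> cycle_edges k vs" and "butlast x = vs ! (j mod length vs)"
  shows "x = cycle_edge k vs j"
proof -
  obtain i where "i < length vs" "x = cycle_edge k vs i"
    using assms(2) by (auto simp: cycle_edges_def)
  moreover have "i mod length vs = j mod length vs"
    using assms(3) c calculation cycle_list_length_pos[OF c]
    by (simp add: butlast_cycle_edge cycle_list_def nth_eq_iff_index_eq)
  ultimately show ?thesis
    by (metis cycle_edge_mod[OF c])
qed

lemma Suc_mod_eq_imp_mod_eq: "Suc i mod p = Suc j mod p \<Longrightarrow> i mod p = j mod p"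
  by (metis Zero_not_Suc mod_Suc old.nat.inject)

lemma cycle_edges_tl_unique:
  assumes c: "cycle_list k vs" and "x \<in> cycle_edges k vs" and "tl x = vs ! (Suc j mod length vs)"
  shows "x = cycle_edge k vs j"
proof -
  obtain i where "i < length vs" "x = cycle_edge k vs i"
    using assms(2) by (auto simp: cycle_edges_def)
  moreover have "Suc i mod length vs = Suc j mod length vs"
    using assms(3) c calculation cycle_list_length_pos[OF c]
    by (simp add: tl_cycle_edge cycle_list_def nth_eq_iff_index_eq)
  ultimately show ?thesis
    by (metis cycle_edge_mod[OF c] Suc_mod_eq_imp_mod_eq)
qed

lemma proj_nu_path:
  assumes c: "cycle_list k vs"
  shows "proj k (nu_path vs) = (\<lambda>x. if x \<in> cycle_edges k vs then 1 / real (length vs) else 0)"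
proof -
  have p: "0 < length vs" using cycle_list_length_pos[OF c] .
  have "map_pmf (\<lambda>\<eta>. window \<eta> 0 (Suc k)) (nu_path vs)
      = map_pmf (cycle_edge k vs) (pmf_of_set {0..<length vs})"
    by (simp add: nu_path_def translates_measure_def pmf.map_comp o_def window_shift
        cycle_edge_def[abs_def])
  also have "\<dots> = pmf_of_set (cycle_edges k vs)"
    unfolding cycle_edges_def using map_pmf_of_set_inj[OF inj_on_cycle_edge[OF c]] p by simp
  finally have "proj k (nu_path vs) = pmf (pmf_of_set (cycle_edges k vs))"
    by (simp add: proj_eq_pmf_window)
  moreover have "cycle_edges k vs \<noteq> {}" "finite (cycle_edges k vs)"
    using p by (auto simp: cycle_edges_def)
  ultimately show ?thesis
    by (simp add: card_cycle_edges[OF c] indicator_def fun_eq_iff)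
qed

section \<open>LTI measures as flows on the de Bruijn graph\<close>

lemma Mk_nonneg: "\<mu> \<in> Mk k \<Longrightarrow> 0 \<le> \<mu> x"
  by (simp add: Mk_def prob_on_Xk_def)

lemma Mk_zero_outside: "\<mu> \<in> Mk k \<Longrightarrow> x \<notin> Xk k \<Longrightarrow> \<mu> x = 0"
  by (auto simp: Mk_def prob_on_Xk_def)

lemma Mk_sum: "\<mu> \<in> Mk k \<Longrightarrow> sum \<mu> (Xk k) = 1"
  by (simp add: Mk_def prob_on_Xk_def)

lemma prob_on_Xk_proj: "prob_on_Xk k (proj k \<nu>)"
proof -
  let ?M = "map_pmf (\<lambda>\<eta>. window \<eta> 0 (Suc k)) \<nu>"
  have "set_pmf ?M \<subseteq> Xk k"
    by (auto simp: window_in_Xk)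
  then show ?thesis
    unfolding prob_on_Xk_def proj_eq_pmf_window
    using sum_pmf_eq_1[OF finite_Xk] by (auto simp: set_pmf_eq)
qed

lemma marg_proj:
  assumes "trans_inv \<nu>" and "(\<lambda>i. i + t) ` A \<subseteq> {0..k}"
  shows "marg k (proj k \<nu>) A t y = measure \<nu> {\<eta>. \<forall>i\<in>A. \<eta> (int i) = y i}"
proof -
  let ?w = "\<lambda>\<eta>. window \<eta> 0 (Suc k)"
  define S where "S = {x \<in> Xk k. \<forall>i\<in>A. x ! (i + t) = y i}"
  have "marg k (proj k \<nu>) A t y = sum (pmf (map_pmf ?w \<nu>)) S"
    by (simp add: marg_def proj_eq_pmf_window S_def)
  also have "\<dots> = measure (map_pmf ?w \<nu>) S"
    by (rule measure_measure_pmf_finite[symmetric]) (simp add: S_def finite_Xk)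
  also have "\<dots> = measure \<nu> (?w -` S)"
    by simp
  also have "?w -` S = shift (int t) -` {\<eta>. \<forall>i\<in>A. \<eta> (int i) = y i}"
    using assms(2) by (force simp: S_def window_in_Xk shift_def add.commute)
  also have "measure \<nu> \<dots> = measure (map_pmf (shift (int t)) \<nu>) {\<eta>. \<forall>i\<in>A. \<eta> (int i) = y i}"
    by simp
  finally show ?thesis
    by (simp add: map_pmf_shift_of_nat[OF assms(1)])
qed

lemma proj_in_Mk: "trans_inv \<nu> \<Longrightarrow> proj k \<nu> \<in> Mk k"
  unfolding Mk_def LTI_def by (auto simp: prob_on_Xk_proj marg_proj)

lemma proj_nu_path_in_Mk: "cycle_list k vs \<Longrightarrow> proj k (nu_path vs) \<in> Mk k"
  unfolding nu_path_def
  by (intro proj_in_Mk trans_inv_translates_measure is_period_path_config)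

text \<open>The two sets are stated exactly as marg unfolds for the shifts 1 and 0.\<close>

lemma Xk_with_tl:
  assumes "length v = k"
  shows "{x \<in> Xk k. \<forall>i\<in>{0..<k}. x ! (i + 1) = v ! i} = {True # v, False # v}"
proof (intro set_eqI iffI)
  fix x
  assume "x \<in> {x \<in> Xk k. \<forall>i\<in>{0..<k}. x ! (i + 1) = v ! i}"
  then obtain b xs where "x = b # xs" "length xs = k" "\<forall>i<k. xs ! i = v ! i"
    by (cases x) (auto simp: Xk_def)
  moreover from this have "xs = v"
    using assms by (simp add: list_eq_iff_nth_eq)
  ultimately have "x = b # v" by simp
  then show "x \<in> {True # v, False # v}"
    by (cases b) auto
qed (use assms in \<open>auto simp: Xk_def\<close>)

lemma Xk_with_butlast:
  assumes "length v = k"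
  shows "{x \<in> Xk k. \<forall>i\<in>{0..<k}. x ! (i + 0) = v ! i} = {v @ [True], v @ [False]}"
proof (intro set_eqI iffI)
  fix x
  assume "x \<in> {x \<in> Xk k. \<forall>i\<in>{0..<k}. x ! (i + 0) = v ! i}"
  then obtain b xs where "x = xs @ [b]" "length xs = k" "\<forall>i<k. xs ! i = v ! i"
    by (cases x rule: rev_cases) (auto simp: Xk_def nth_append)
  moreover from this have "xs = v"
    using assms by (simp add: list_eq_iff_nth_eq)
  ultimately have "x = v @ [b]" by simp
  then show "x \<in> {v @ [True], v @ [False]}"
    by (cases b) auto
qed (use assms in \<open>auto simp: Xk_def nth_append\<close>)

text \<open>The LTI condition for the two windows of length k is Kirchhoff's law at the vertex v.\<close>

lemma Mk_flow_conservation: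
  assumes "\<mu> \<in> Mk k" and "length v = k"
  shows "\<mu> (v @ [True]) + \<mu> (v @ [False]) = \<mu> (True # v) + \<mu> (False # v)"
proof -
  have "{0..<k} \<subseteq> {0..k}" "(\<lambda>i. i + 1) ` {0..<k} \<subseteq> {0..k}"
    by auto
  then have "marg k \<mu> {0..<k} 1 (\<lambda>i. v ! i) = marg k \<mu> {0..<k} 0 (\<lambda>i. v ! i)"
    using assms(1) unfolding Mk_def LTI_def by blast
  then show ?thesis
    unfolding marg_def Xk_with_tl[OF assms(2)] Xk_with_butlast[OF assms(2)] by simp
qed

lemma LTI_linear_combination:
  assumes "LTI k f" "LTI k g"
  shows "LTI k (\<lambda>x. a * f x + b * g x)"
  unfolding LTI_def
proof (intro allI impI)
  fix A t y
  assume "A \<subseteq> {0..k} \<and> (\<lambda>i. i + t) ` A \<subseteq> {0..k}"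
  then have "marg k f A t y = marg k f A 0 y" "marg k g A t y = marg k g A 0 y"
    using assms unfolding LTI_def by blast+
  moreover have "marg k (\<lambda>x. a * f x + b * g x) A s y = a * marg k f A s y + b * marg k g A s y"
    for s
    by (simp add: marg_def sum.distrib sum_distrib_left)
  ultimately show "marg k (\<lambda>x. a * f x + b * g x) A t y = marg k (\<lambda>x. a * f x + b * g x) A 0 y"
    by simp
qed

section \<open>Cycle measures are extreme\<close>

text \<open>On the cycle, the vertex between two consecutive edges has no other incident edge of positive
  weight, so conservation at that vertex makes the two weights equal.\<close>

lemma Mk_cycle_edge_Suc:
  assumes c: "cycle_list k vs" and M: "\<mu> \<in> Mk k"
    and supp: "\<And>x. \<mu> x \<noteq> 0 \<Longrightarrow> x \<in> cycle_edges k vs"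
  shows "\<mu> (cycle_edge k vs (Suc j)) = \<mu> (cycle_edge k vs j)"
proof -
  define v where "v = vs ! (Suc j mod length vs)"
  have "length v = k"
    using c cycle_list_length_pos[OF c] by (simp add: v_def cycle_list_length_nth)
  have ne: "cycle_edge k vs i \<noteq> []" for i
    by (simp add: cycle_edge_def flip: length_greater_0_conv)
  define a where "a = hd (cycle_edge k vs j)"
  have in_edge: "cycle_edge k vs j = a # v"
    using hd_Cons_tl[OF ne] tl_cycle_edge[OF c] by (simp add: a_def v_def)
  define b where "b = last (cycle_edge k vs (Suc j))"
  have out_edge: "cycle_edge k vs (Suc j) = v @ [b]"
    using append_butlast_last_id[OF ne] butlast_cycle_edge[OF c] by (simp add: b_def v_def)
  have "\<mu> ((\<not> a) # v) = 0"
    using cycle_edges_tl_unique[OF c, of "(\<not> a) # v" j] supp in_edge by (auto simp: v_def)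
  then have "\<mu> (True # v) + \<mu> (False # v) = \<mu> (cycle_edge k vs j)"
    by (cases a) (simp_all add: in_edge)
  moreover have "\<mu> (v @ [\<not> b]) = 0"
    using cycle_edges_butlast_unique[OF c, of "v @ [\<not> b]" "Suc j"] supp out_edge
    by (auto simp: v_def)
  then have "\<mu> (v @ [True]) + \<mu> (v @ [False]) = \<mu> (cycle_edge k vs (Suc j))"
    by (cases b) (simp_all add: out_edge)
  ultimately show ?thesis
    using Mk_flow_conservation[OF M \<open>length v = k\<close>] by simp
qed

lemma Mk_eq_proj_nu_path_if_supported:
  assumes c: "cycle_list k vs" and M: "\<mu> \<in> Mk k"
    and supp: "\<And>x. \<mu> x \<noteq> 0 \<Longrightarrow> x \<in> cycle_edges k vs"
  shows "\<mu> = proj k (nu_path vs)"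
proof -
  have p: "0 < length vs" using cycle_list_length_pos[OF c] .
  have const: "\<mu> (cycle_edge k vs j) = \<mu> (cycle_edge k vs 0)" for j
    by (induction j) (simp_all add: Mk_cycle_edge_Suc[OF c M supp])
  have "1 = sum \<mu> (Xk k)"
    using Mk_sum[OF M] by simp
  also have "\<dots> = sum \<mu> (cycle_edges k vs)"
    by (rule sum.mono_neutral_right[OF finite_Xk cycle_edges_subset_Xk]) (use supp in blast)
  also have "\<dots> = (\<Sum>j<length vs. \<mu> (cycle_edge k vs j))"
    unfolding cycle_edges_def using sum.reindex[OF inj_on_cycle_edge[OF c]]
    by (simp add: atLeast0LessThan)
  also have "\<dots> = (\<Sum>j<length vs. \<mu> (cycle_edge k vs 0))"
    by (rule sum.cong[OF refl const])
  also have "\<dots> = real (length vs) * \<mu> (cycle_edge k vs 0)"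
    by simp
  finally have edge0: "\<mu> (cycle_edge k vs 0) = 1 / real (length vs)"
    using p by (simp add: field_simps)
  show ?thesis
  proof
    fix x
    show "\<mu> x = proj k (nu_path vs) x"
    proof (cases "x \<in> cycle_edges k vs")
      case True
      then obtain i where "x = cycle_edge k vs i"
        by (auto simp: cycle_edges_def)
      then show ?thesis
        using True const[of i] edge0 by (simp add: proj_nu_path[OF c])
    next
      case False
      then show ?thesis
        using supp by (force simp: proj_nu_path[OF c])
    qed
  qed
qed

lemma extreme_pt_proj_nu_path:
  assumes c: "cycle_list k vs"
  shows "extreme_pt (Mk k) (proj k (nu_path vs))"
  unfolding extreme_pt_def
proof (intro conjI notI)
  show "proj k (nu_path vs) \<in> Mk k"
    using proj_nu_path_in_Mk[OF c] .
  assume "\<exists>a\<in>Mk k. \<exists>b\<in>Mk k. \<exists>t. 0 < t \<and> t < 1 \<and> a \<noteq> b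
    \<and> proj k (nu_path vs) = (\<lambda>z. t * a z + (1 - t) * b z)"
  then obtain a b t where a: "a \<in> Mk k" and b: "b \<in> Mk k" and t: "0 < t" "t < 1" and "a \<noteq> b"
    and eq: "proj k (nu_path vs) = (\<lambda>z. t * a z + (1 - t) * b z)"
    by blast
  have "a x = 0 \<and> b x = 0" if "x \<notin> cycle_edges k vs" for x
  proof -
    have "t * a x + (1 - t) * b x = 0"
      using that fun_cong[OF eq, of x] by (simp add: proj_nu_path[OF c])
    moreover have "0 \<le> t * a x" "0 \<le> (1 - t) * b x"
      using Mk_nonneg[OF a] Mk_nonneg[OF b] t by simp_all
    ultimately show ?thesis
      using t by (simp add: add_nonneg_eq_0_iff)
  qed
  then have "a = proj k (nu_path vs)" "b = proj k (nu_path vs)"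
    using Mk_eq_proj_nu_path_if_supported[OF c] a b by blast+
  with \<open>a \<noteq> b\<close> show False by simp
qed

section \<open>Decomposition into cycle measures\<close>

lemma funpow_orbit_cycle:
  assumes "finite (range (\<lambda>n. (f ^^ n) x))"
  obtains i p where "0 < p" "(f ^^ (i + p)) x = (f ^^ i) x"
    "distinct (map (\<lambda>m. (f ^^ (i + m)) x) [0..<p])"
proof -
  let ?g = "\<lambda>n. (f ^^ n) x"
  define Q where "Q j \<longleftrightarrow> (\<exists>i<j. ?g i = ?g j)" for j
  have "\<not> inj ?g"
    using assms range_inj_infinite by blast
  then obtain a b where "a < b" "?g a = ?g b"
    unfolding inj_def by (metis nat_neq_iff)
  then have "Q b"
    unfolding Q_def by blast
  define j where "j = (LEAST j. Q j)"
  obtain i where "i < j" and repeat: "?g i = ?g j"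
    using LeastI[of Q, OF \<open>Q b\<close>] unfolding Q_def j_def by blast
  have minimal: "?g m \<noteq> ?g n" if "m < n" "n < j" for m n
    using not_less_Least[of n Q] that unfolding Q_def j_def by blast
  have "distinct (map (\<lambda>m. ?g (i + m)) [0..<j - i])"
    unfolding distinct_conv_nth
  proof (intro allI impI)
    fix m n
    assume mn: "m < length (map (\<lambda>m. ?g (i + m)) [0..<j - i])"
      "n < length (map (\<lambda>m. ?g (i + m)) [0..<j - i])" "m \<noteq> n"
    then have "i + m < j" "i + n < j" "i + m \<noteq> i + n"
      by auto
    then have "?g (i + m) \<noteq> ?g (i + n)"
      using minimal[of "i + m" "i + n"] minimal[of "i + n" "i + m"] by (metis nat_neq_iff)
    then show "map (\<lambda>m. ?g (i + m)) [0..<j - i] ! m \<noteq> map (\<lambda>m. ?g (i + m)) [0..<j - i] ! n"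
      using mn by simp
  qed
  then show ?thesis
    using that[of "j - i" i] \<open>i < j\<close> repeat by simp
qed

lemma cycle_list_of_successor:
  assumes closed: "\<And>v. P v \<Longrightarrow> P (f v)" and edge: "\<And>v. P v \<Longrightarrow> dB_edge k v (f v)"
    and "P v\<^sub>0" and "finite {v. P v}"
  obtains vs where "cycle_list k vs"
    "\<And>i. i < length vs \<Longrightarrow> P (vs ! i) \<and> vs ! (Suc i mod length vs) = f (vs ! i)"
proof -
  have P: "P ((f ^^ n) v\<^sub>0)" for n
    by (induction n) (simp_all add: \<open>P v\<^sub>0\<close> closed)
  then have "finite (range (\<lambda>n. (f ^^ n) v\<^sub>0))"
    by (intro finite_subset[OF _ \<open>finite {v. P v}\<close>]) auto
  then obtain i p where "0 < p" and period: "(f ^^ (i + p)) v\<^sub>0 = (f ^^ i) v\<^sub>0"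
    and dist: "distinct (map (\<lambda>m. (f ^^ (i + m)) v\<^sub>0) [0..<p])"
    by (rule funpow_orbit_cycle)
  define vs where "vs = map (\<lambda>m. (f ^^ (i + m)) v\<^sub>0) [0..<p]"
  have succ: "vs ! (Suc m mod length vs) = f (vs ! m)" if "m < length vs" for m
  proof (cases "Suc m < p")
    case False
    then have "Suc m = p" using that by (simp add: vs_def)
    then have "vs ! (Suc m mod length vs) = (f ^^ (i + p)) v\<^sub>0"
      using period \<open>0 < p\<close> by (simp add: vs_def)
    also have "\<dots> = f (vs ! m)"
      using that unfolding \<open>Suc m = p\<close>[symmetric] by (simp add: vs_def)
    finally show ?thesis .
  qed (use that in \<open>simp add: vs_def\<close>)
  have "cycle_list k vs"
    unfolding cycle_list_def using dist \<open>0 < p\<close> succ edge P by (simp add: vs_def)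
  moreover have "P (vs ! m)" if "m < length vs" for m
    using that P by (simp add: vs_def)
  ultimately show ?thesis
    using that succ by blast
qed

lemma cycle_edge_eq_snoc:
  assumes c: "cycle_list k vs" and "1 \<le> k"
  shows "cycle_edge k vs j = vs ! (j mod length vs) @ [last (vs ! (Suc j mod length vs))]"
proof -
  let ?e = "cycle_edge k vs j"
  have "length ?e = Suc k"
    by (simp add: cycle_edge_def)
  then have "?e \<noteq> []" "tl ?e \<noteq> []"
    using assms(2) by (cases ?e; auto)+
  then show ?thesis
    using append_butlast_last_id[of ?e] last_tl[of ?e]
    by (simp add: butlast_cycle_edge[OF c] tl_cycle_edge[OF c])
qed

lemma Mk_positive_out_edge:
  assumes M: "\<mu> \<in> Mk k" and "length v = k" and "0 < \<mu> (a # v)"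
  shows "\<exists>b. 0 < \<mu> (v @ [b])"
proof -
  have "0 < \<mu> (True # v) + \<mu> (False # v)"
    using assms(3) Mk_nonneg[OF M] by (cases a) (auto intro: add_pos_nonneg add_nonneg_pos)
  then have "0 < \<mu> (v @ [True]) + \<mu> (v @ [False])"
    using Mk_flow_conservation[OF M assms(2)] by simp
  then show ?thesis
    by (metis add_nonpos_nonpos not_less)
qed

text \<open>Walk along positive edges: by conservation, a vertex entered by a positive edge is also left
  by one.\<close>

lemma Mk_positive_cycle:
  assumes M: "\<mu> \<in> Mk k" and k: "1 \<le> k"
  obtains vs where "cycle_list k vs" "\<And>x. x \<in> cycle_edges k vs \<Longrightarrow> 0 < \<mu> x"
proof -
  define P where "P v \<longleftrightarrow> length v = k \<and> (\<exists>a. 0 < \<mu> (a # v))" for v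
  define f where "f v = tl v @ [SOME b. 0 < \<mu> (v @ [b])]" for v
  have out: "0 < \<mu> (v @ [last (f v)])" if "P v" for v
  proof -
    have "\<exists>b. 0 < \<mu> (v @ [b])"
      using Mk_positive_out_edge[OF M] that by (auto simp: P_def)
    then have "0 < \<mu> (v @ [SOME b. 0 < \<mu> (v @ [b])])"
      by (rule someI_ex)
    then show ?thesis
      by (simp add: f_def)
  qed
  have edge: "dB_edge k v (f v)" if "P v" for v
    using that k by (auto simp: P_def f_def dB_edge_def)
  have closed: "P (f v)" if "P v" for v
  proof -
    have "hd v # f v = v @ [last (f v)]"
      using that k by (cases v) (auto simp: P_def f_def)
    then show ?thesis
      using out[OF that] edge[OF that] by (metis P_def dB_edge_def)
  qed
  have "\<exists>x\<in>Xk k. 0 < \<mu> x"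
  proof (rule ccontr)
    assume "\<not> (\<exists>x\<in>Xk k. 0 < \<mu> x)"
    then have "sum \<mu> (Xk k) \<le> 0"
      by (simp add: sum_nonpos not_less)
    then show False
      using Mk_sum[OF M] by simp
  qed
  then obtain x\<^sub>0 where "x\<^sub>0 \<in> Xk k" "0 < \<mu> x\<^sub>0" ..
  then have "P (tl x\<^sub>0)"
    by (cases x\<^sub>0) (auto simp: P_def Xk_def)
  moreover have "finite {v. P v}"
    using finite_lists_length_eq[of "UNIV :: bool set" k] by (auto simp: P_def intro: finite_subset)
  ultimately obtain vs where c: "cycle_list k vs"
    and along: "\<And>i. i < length vs \<Longrightarrow> P (vs ! i) \<and> vs ! (Suc i mod length vs) = f (vs ! i)"
    using cycle_list_of_successor[of P f k] closed edge by blast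
  have "0 < \<mu> x" if x: "x \<in> cycle_edges k vs" for x
  proof -
    obtain i where "i < length vs" "x = cycle_edge k vs i"
      using x by (auto simp: cycle_edges_def)
    then show ?thesis
      using along out cycle_edge_eq_snoc[OF c k] by simp
  qed
  with c that show ?thesis by blast
qed

lemma Mk_eq_if_le:
  assumes M: "\<mu> \<in> Mk k" and P: "\<pi> \<in> Mk k" and le: "\<And>x. \<pi> x \<le> \<mu> x"
  shows "\<mu> = \<pi>"
proof -
  have "sum (\<lambda>x. \<mu> x - \<pi> x) (Xk k) = 0"
    using Mk_sum[OF M] Mk_sum[OF P] by (simp add: sum_subtractf)
  then have "\<forall>x\<in>Xk k. \<mu> x - \<pi> x = 0"
    using sum_nonneg_eq_0_iff[OF finite_Xk, where f = "\<lambda>x. \<mu> x - \<pi> x"] le by simp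
  then show ?thesis
    using Mk_zero_outside[OF M] Mk_zero_outside[OF P] by fastforce
qed

lemma Mk_remove_component:
  assumes M: "\<mu> \<in> Mk k" and P: "\<pi> \<in> Mk k" and t: "t < 1" and le: "\<And>x. t * \<pi> x \<le> \<mu> x"
  defines "\<mu>' \<equiv> \<lambda>x. (\<mu> x - t * \<pi> x) / (1 - t)"
  shows "\<mu>' \<in> Mk k" and "\<mu> = (\<lambda>x. t * \<pi> x + (1 - t) * \<mu>' x)"
proof -
  have "\<mu>' = (\<lambda>x. (1 / (1 - t)) * \<mu> x + (- t / (1 - t)) * \<pi> x)"
    using t by (auto simp: \<mu>'_def fun_eq_iff diff_divide_distrib)
  then have "LTI k \<mu>'"
    using M P by (simp only:) (intro LTI_linear_combination; simp add: Mk_def)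
  moreover have "sum \<mu>' (Xk k) = 1"
  proof -
    have "sum \<mu>' (Xk k) = (sum \<mu> (Xk k) - t * sum \<pi> (Xk k)) / (1 - t)"
      by (simp add: \<mu>'_def sum_subtractf sum_distrib_left flip: sum_divide_distrib)
    then show ?thesis
      using Mk_sum[OF M] Mk_sum[OF P] t by simp
  qed
  moreover have "\<mu>' x = 0" if "x \<notin> Xk k" for x
    using Mk_zero_outside[OF M that] Mk_zero_outside[OF P that] by (simp add: \<mu>'_def)
  ultimately show "\<mu>' \<in> Mk k"
    using le t by (auto simp: Mk_def prob_on_Xk_def \<mu>'_def)
  show "\<mu> = (\<lambda>x. t * \<pi> x + (1 - t) * \<mu>' x)"
    using t by (simp add: \<mu>'_def fun_eq_iff)
qed

lemma Mk_scaled_le_imp_le_one: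
  assumes M: "\<mu> \<in> Mk k" and P: "\<pi> \<in> Mk k" and le: "\<And>x. t * \<pi> x \<le> \<mu> x"
  shows "t \<le> 1"
proof -
  have "t = t * sum \<pi> (Xk k)"
    using Mk_sum[OF P] by simp
  also have "\<dots> = sum (\<lambda>x. t * \<pi> x) (Xk k)"
    by (rule sum_distrib_left)
  also have "\<dots> \<le> sum \<mu> (Xk k)"
    by (rule sum_mono) (rule le)
  finally show ?thesis
    using Mk_sum[OF M] by simp
qed

definition window_support :: "nat \<Rightarrow> (bool list \<Rightarrow> real) \<Rightarrow> bool list set" where
  "window_support k \<mu> = {x \<in> Xk k. \<mu> x \<noteq> 0}"

text \<open>Subtract the largest multiple of the cycle measure that keeps all weights nonnegative;
  this kills the edge of the cycle of least weight.\<close>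

lemma Mk_split_off_cycle:
  assumes M: "\<mu> \<in> Mk k" and k: "1 \<le> k"
  obtains vs where "cycle_list k vs" "\<mu> = proj k (nu_path vs)"
  | vs t \<mu>' where "cycle_list k vs" "0 < t" "t < 1" "\<mu>' \<in> Mk k"
      "\<mu> = (\<lambda>x. t * proj k (nu_path vs) x + (1 - t) * \<mu>' x)"
      "card (window_support k \<mu>') < card (window_support k \<mu>)"
proof -
  obtain vs where c: "cycle_list k vs" and pos: "\<And>x. x \<in> cycle_edges k vs \<Longrightarrow> 0 < \<mu> x"
    using Mk_positive_cycle[OF M k] by blast
  define E where "E = cycle_edges k vs"
  define \<pi> where "\<pi> = proj k (nu_path vs)"
  have p: "0 < length vs" using cycle_list_length_pos[OF c] .
  have \<pi>: "\<pi> x = (if x \<in> E then 1 / real (length vs) else 0)" for x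
    by (simp add: \<pi>_def E_def proj_nu_path[OF c])
  have "finite E" "E \<noteq> {}"
    using p by (auto simp: E_def cycle_edges_def)
  then obtain x\<^sub>1 where x\<^sub>1: "x\<^sub>1 \<in> E" and min: "\<And>x. x \<in> E \<Longrightarrow> \<mu> x\<^sub>1 \<le> \<mu> x"
    using Min_in[of "\<mu> ` E"] Min_le[of "\<mu> ` E"]
    by (metis (no_types, lifting) finite_imageI image_iff image_is_empty)
  define t where "t = \<mu> x\<^sub>1 * real (length vs)"
  have "0 < t"
    using pos x\<^sub>1 p by (simp add: t_def E_def)
  have le: "t * \<pi> x \<le> \<mu> x" for x
    using min Mk_nonneg[OF M] p by (simp add: \<pi> t_def)
  have "t \<le> 1"
    using Mk_scaled_le_imp_le_one[OF M proj_nu_path_in_Mk[OF c]] le by (simp add: \<pi>_def)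
  show ?thesis
  proof (cases "t = 1")
    case True
    then show ?thesis
      using that(1)[OF c] Mk_eq_if_le[OF M proj_nu_path_in_Mk[OF c]] le by (simp add: \<pi>_def)
  next
    case False
    define \<mu>' where "\<mu>' = (\<lambda>x. (\<mu> x - t * \<pi> x) / (1 - t))"
    have "t < 1" using False \<open>t \<le> 1\<close> by simp
    then have M': "\<mu>' \<in> Mk k" and eq: "\<mu> = (\<lambda>x. t * \<pi> x + (1 - t) * \<mu>' x)"
      using Mk_remove_component[OF M proj_nu_path_in_Mk[OF c]] le unfolding \<mu>'_def \<pi>_def
      by blast+
    have "\<mu>' x = 0" if "\<mu> x = 0" for x
      using pos[of x] that by (auto simp: \<mu>'_def \<pi> E_def)
    then have "window_support k \<mu>' \<subseteq> window_support k \<mu>"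
      by (auto simp: window_support_def)
    moreover have "x\<^sub>1 \<in> window_support k \<mu> - window_support k \<mu>'"
      using x\<^sub>1 pos[of x\<^sub>1] p cycle_edges_subset_Xk
      by (auto simp: window_support_def \<mu>'_def \<pi> t_def E_def)
    ultimately have "card (window_support k \<mu>') < card (window_support k \<mu>)"
      by (intro psubset_card_mono) (auto simp: window_support_def finite_Xk)
    then show ?thesis
      using that(2)[OF c \<open>0 < t\<close> \<open>t < 1\<close> M' eq[unfolded \<pi>_def]] by blast
  qed
qed

lemma proj_join_pmf_mixture:
  assumes "0 \<le> t" "t \<le> 1"
  shows "proj k (join_pmf (bind_pmf (bernoulli_pmf t) (\<lambda>b. if b then return_pmf \<nu> else W)))
    = (\<lambda>x. t * proj k \<nu> x + (1 - t) * proj k (join_pmf W) x)"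
proof -
  have "join_pmf (bind_pmf (bernoulli_pmf t) (\<lambda>b. if b then return_pmf \<nu> else W))
      = bind_pmf (bernoulli_pmf t) (\<lambda>b. if b then \<nu> else join_pmf W)"
    unfolding join_eq_bind_pmf bind_assoc_pmf
    by (rule bind_pmf_cong) (simp_all add: bind_return_pmf)
  then show ?thesis
    using assms by (simp add: proj_eq_pmf_window map_bind_pmf pmf_bind fun_eq_iff)
qed

lemma nu_path_in_nu_cycle_image:
  "cycle_list k vs \<Longrightarrow> \<exists>C\<in>cycles k. nu_path vs = nu_cycle C"
  using nu_cycle_rotations by (auto simp: cycles_eq_image_rotations)

lemma Mk_eq_proj_cycle_mixture:
  assumes k: "1 \<le> k" and "\<mu> \<in> Mk k"
  shows "\<exists>W :: config pmf pmf. finite (set_pmf W) \<and> (\<forall>\<nu>\<in>set_pmf W. \<exists>C\<in>cycles k. \<nu> = nu_cycle C)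
           \<and> proj k (join_pmf W) = \<mu>"
  using \<open>\<mu> \<in> Mk k\<close>
proof (induction "card (window_support k \<mu>)" arbitrary: \<mu> rule: less_induct)
  case less
  show ?case
    using less.prems k
  proof (cases rule: Mk_split_off_cycle)
    case (1 vs)
    then show ?thesis
      using nu_path_in_nu_cycle_image
      by (intro exI[of _ "return_pmf (nu_path vs)"]) (auto simp: join_return_pmf)
  next
    case (2 vs t \<mu>')
    obtain W' where W': "finite (set_pmf W')" "\<forall>\<nu>\<in>set_pmf W'. \<exists>C\<in>cycles k. \<nu> = nu_cycle C"
      "proj k (join_pmf W') = \<mu>'"
      using less.hyps 2 by blast
    define W where "W = bind_pmf (bernoulli_pmf t) (\<lambda>b. if b then return_pmf (nu_path vs) else W')"
    have "set_pmf W = insert (nu_path vs) (set_pmf W')"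
      using 2 by (auto simp: W_def split: if_splits)
    moreover have "proj k (join_pmf W) = \<mu>"
      using 2 W'(3) by (simp add: W_def proj_join_pmf_mixture)
    ultimately show ?thesis
      using W' nu_path_in_nu_cycle_image[OF \<open>cycle_list k vs\<close>] by (intro exI[of _ W]) auto
  qed
qed

lemma extreme_pt_Mk_iff:
  assumes k: "1 \<le> k"
  shows "extreme_pt (Mk k) \<mu> \<longleftrightarrow> (\<exists>vs. cycle_list k vs \<and> \<mu> = proj k (nu_path vs))"
proof
  assume ext: "extreme_pt (Mk k) \<mu>"
  then have "\<mu> \<in> Mk k"
    by (simp add: extreme_pt_def)
  then show "\<exists>vs. cycle_list k vs \<and> \<mu> = proj k (nu_path vs)"
    using k
  proof (cases rule: Mk_split_off_cycle)
    case (2 vs t \<mu>')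
    then have "proj k (nu_path vs) = \<mu>'"
      using ext proj_nu_path_in_Mk[of k vs] unfolding extreme_pt_def by blast
    with 2 show ?thesis
      by (auto simp: algebra_simps)
  qed blast
next
  assume "\<exists>vs. cycle_list k vs \<and> \<mu> = proj k (nu_path vs)"
  then show "extreme_pt (Mk k) \<mu>"
    using extreme_pt_proj_nu_path by blast
qed

section \<open>Cycles and k-primitive periodic configurations\<close>

lemma cycle_list_windows:
  assumes per: "is_period \<eta> p" and kp: "k_primitive k \<eta> p" and k: "1 \<le> k"
  defines "vs \<equiv> map (\<lambda>i. window \<eta> (int i) k) [0..<p]"
  shows "cycle_list k vs" and "path_config vs = \<eta>"
proof -
  have p: "0 < p"
    using per by (simp add: is_period_def)
  have nth_vs: "vs ! (i mod p) = window \<eta> (int i) k" for i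
    using shift_mod_period[OF per, of i] window_shift[of "int (i mod p)" \<eta> 0 k]
      window_shift[of "int i" \<eta> 0 k] p by (simp add: vs_def)
  have "distinct vs"
    unfolding distinct_conv_nth
  proof (intro allI impI)
    fix i j
    assume ij: "i < length vs" "j < length vs" "i \<noteq> j"
    show "vs ! i \<noteq> vs ! j"
    proof
      assume "vs ! i = vs ! j"
      then have "int p dvd int j - int i"
        using ij kp nth_vs[of i] nth_vs[of j] by (simp add: vs_def k_primitive_def window_eq_iff)
      then have "i mod p = j mod p"
        by (metis mod_eq_dvd_iff of_nat_eq_iff zmod_int)
      then show False
        using ij by (simp add: vs_def)
    qed
  qed
  moreover have "dB_edge k (vs ! i) (vs ! (Suc i mod length vs))" if "i < p" for i
  proof -
    have "tl (window \<eta> (int i) k) = butlast (window \<eta> (int (Suc i)) k)"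
      by (simp add: list_eq_iff_nth_eq nth_tl nth_butlast algebra_simps)
    then show ?thesis
      using that nth_vs[of "Suc i"] by (simp add: dB_edge_def vs_def)
  qed
  ultimately show c: "cycle_list k vs"
    using p by (simp add: cycle_list_def vs_def)
  show "path_config vs = \<eta>"
  proof
    fix x
    have "nat (x mod int p) < p"
      using p by (simp add: nat_less_iff)
    then have "path_config vs x = \<eta> (x mod int p)"
      using k p by (simp add: path_config_def vs_def window_def hd_map)
    then show "path_config vs x = \<eta> x"
      by (simp add: is_period_mod[OF per])
  qed
qed

lemma nu_cycle_image: "1 \<le> k \<Longrightarrow> nu_cycle ` cycles k = {\<nu>. kprim_BPC k \<nu>}"
proof (intro set_eqI iffI)
  fix \<nu>
  assume "\<nu> \<in> nu_cycle ` cycles k" and "1 \<le> k"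
  then obtain vs where c: "cycle_list k vs" and "\<nu> = nu_path vs"
    by (auto simp: cycles_eq_image_rotations nu_cycle_rotations)
  then show "\<nu> \<in> {\<nu>. kprim_BPC k \<nu>}"
    using min_period_path_config[OF c \<open>1 \<le> k\<close>] k_primitive_path_config[OF c]
    by (auto simp: kprim_BPC_def nu_path_def)
next
  fix \<nu>
  assume "\<nu> \<in> {\<nu>. kprim_BPC k \<nu>}" and "1 \<le> k"
  then obtain \<eta> p where mp: "min_period \<eta> p" and kp: "k_primitive k \<eta> p"
    and \<nu>: "\<nu> = translates_measure \<eta> p"
    by (auto simp: kprim_BPC_def)
  define vs where "vs = map (\<lambda>i. window \<eta> (int i) k) [0..<p]"
  have c: "cycle_list k vs" and "path_config vs = \<eta>"
    using cycle_list_windows[OF mp[unfolded min_period_def, THEN conjunct1] kp \<open>1 \<le> k\<close>] by (simp_all add: vs_def)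
  then have "\<nu> = nu_path vs"
    by (simp add: \<nu> nu_path_def vs_def)
  then show "\<nu> \<in> nu_cycle ` cycles k"
    using nu_path_in_nu_cycle_image[OF c] by auto
qed

lemma inj_on_nu_cycle: "1 \<le> k \<Longrightarrow> inj_on nu_cycle (cycles k)"
proof (rule inj_onI)
  fix C\<^sub>1 C\<^sub>2
  assume "1 \<le> k" "C\<^sub>1 \<in> cycles k" "C\<^sub>2 \<in> cycles k" and eq: "nu_cycle C\<^sub>1 = nu_cycle C\<^sub>2"
  then obtain vs\<^sub>1 vs\<^sub>2 where c: "cycle_list k vs\<^sub>1" "cycle_list k vs\<^sub>2"
    and C: "C\<^sub>1 = rotations vs\<^sub>1" "C\<^sub>2 = rotations vs\<^sub>2"
    by (auto simp: cycles_eq_image_rotations)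
  have "path_config vs\<^sub>2 \<in> set_pmf (nu_path vs\<^sub>2)"
    unfolding nu_path_def set_pmf_translates_measure[OF cycle_list_length_pos[OF c(2)]]
    using c(2) by (intro image_eqI[where x = 0]) (simp_all add: shift_def cycle_list_def)
  also have "nu_path vs\<^sub>2 = nu_path vs\<^sub>1"
    using eq C c by (simp add: nu_cycle_rotations)
  finally obtain j where "path_config vs\<^sub>2 = shift (int j) (path_config vs\<^sub>1)"
    using cycle_list_length_pos[OF c(1)] by (auto simp: nu_path_def set_pmf_translates_measure)
  then have "vs\<^sub>2 = rotate j vs\<^sub>1"
    using path_config_inj[OF c(2) cycle_list_rotate[OF c(1)] \<open>1 \<le> k\<close>]
    by (simp add: path_config_rotate[OF c(1)])
  then show "C\<^sub>1 = C\<^sub>2"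
    by (simp add: C rotations_rotate)
qed

lemma PC_nu_path: "cycle_list k vs \<Longrightarrow> PC (nu_path vs)"
  using is_period_path_config[of k vs] cycle_list_length_pos[of k vs]
  by (auto simp: PC_def nu_path_def trans_inv_translates_measure set_pmf_translates_measure
      periodic_def intro: is_period_shift)

lemma PC_join_pmf:
  assumes "\<And>\<nu>. \<nu> \<in> set_pmf W \<Longrightarrow> PC \<nu>"
  shows "PC (join_pmf W)"
proof -
  have "map_pmf (map_pmf (shift 1)) W = W"
    by (rule map_pmf_idI) (use assms in \<open>simp add: PC_def trans_inv_def\<close>)
  then have "trans_inv (join_pmf W)"
    by (simp add: trans_inv_def map_join_pmf)
  then show ?thesis
    using assms by (auto simp: PC_def)
qed

theorem theorem3:
  fixes k :: nat
  assumes "1 \<le> k"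
  shows "bij_betw nu_cycle (cycles k) {\<nu>. kprim_BPC k \<nu>}
    \<and> {\<mu>. extreme_pt (Mk k) \<mu>} = (\<lambda>C. proj k (nu_cycle C)) ` cycles k
    \<and> (\<forall>\<mu>\<in>Mk k. \<exists>W :: config pmf pmf. finite (set_pmf W)
           \<and> (\<forall>\<nu>\<in>set_pmf W. \<exists>C\<in>cycles k. \<nu> = nu_cycle C)
           \<and> proj k (join_pmf W) = \<mu>)
    \<and> (\<forall>\<mu>\<in>Mk k. \<exists>\<nu>. PC \<nu> \<and> proj k \<nu> = \<mu>)"
proof (intro conjI ballI)
  show "bij_betw nu_cycle (cycles k) {\<nu>. kprim_BPC k \<nu>}"
    using assms by (simp add: bij_betw_def inj_on_nu_cycle nu_cycle_image)
  have "(\<lambda>C. proj k (nu_cycle C)) ` cycles k = (\<lambda>vs. proj k (nu_path vs)) ` {vs. cycle_list k vs}"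
    unfolding cycles_eq_image_rotations image_image
    by (rule image_cong) (simp_all add: nu_cycle_rotations)
  then show "{\<mu>. extreme_pt (Mk k) \<mu>} = (\<lambda>C. proj k (nu_cycle C)) ` cycles k"
    by (auto simp: extreme_pt_Mk_iff[OF assms])
  fix \<mu>
  assume "\<mu> \<in> Mk k"
  then obtain W :: "config pmf pmf" where "finite (set_pmf W)"
    and cyc: "\<forall>\<nu>\<in>set_pmf W. \<exists>C\<in>cycles k. \<nu> = nu_cycle C" and "proj k (join_pmf W) = \<mu>"
    using Mk_eq_proj_cycle_mixture[OF assms] by blast
  then show "\<exists>W :: config pmf pmf. finite (set_pmf W)
      \<and> (\<forall>\<nu>\<in>set_pmf W. \<exists>C\<in>cycles k. \<nu> = nu_cycle C) \<and> proj k (join_pmf W) = \<mu>"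
    by blast
  have "PC \<nu>" if "\<nu> \<in> set_pmf W" for \<nu>
    using cyc that PC_nu_path by (auto simp: cycles_eq_image_rotations nu_cycle_rotations)
  then show "\<exists>\<nu>. PC \<nu> \<and> proj k \<nu> = \<mu>"
    using PC_join_pmf \<open>proj k (join_pmf W) = \<mu>\<close> by blast
qed

end
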